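(* (Simulation of $\lambda_{\mathrm{act}}$ term reduction in $\lambda_{\mathrm{ch}}$.) If $\Gamma \mid B \vdash M_1 : A$ and $M_1 \longrightarrow_{\mathsf{M}} M_2$ in $\lambda_{\mathrm{act}}$, then for any $\alpha$, $[\![M_1]\!]\alpha \longrightarrow_{\mathsf{M}}^{*} [\![M_2]\!]\alpha$ in $\lambda_{\mathrm{ch}}$.
   Context: $\lambda_{\mathrm{act}}$: types $A,B,C ::= \mathbf{1}\mid A\xrightarrow{C}B\mid\mathsf{ActorRef}(A)$; $\alpha$ ranges over variables and names; values $V,W ::= \alpha\mid\lambda x.M\mid()$; computations $M ::= V\,W\mid\mathbf{let}\ x\Leftarrow M\ \mathbf{in}\ N\mid\mathbf{return}\ V\mid\mathbf{spawn}\ M\mid\mathbf{send}\ V\ W\mid\mathbf{receive}\mid\mathbf{self}$; value typing ($\Gamma\vdash\lambda x.M:A\xrightarrow{C}B$ if $\Gamma,x:A\mid C\vdash M:B$; variables/names from $\Gamma$; $():\mathbf 1$) and computation typing $\Gamma\mid C\vdash M:A$ ($V\,W:B$ if $V:A\xrightarrow{C}B$, $W:A$; $\mathbf{let}$ with both parts under $C$; $\mathbf{return}\ V:A$ if $V:A$; $\mathbf{send}\ V\ W:\mathbf 1$ if $V:A$, $W:\mathsf{ActorRef}(A)$; $\Gamma\mid A\vdash\mathbf{receive}:A$; $\Gamma\mid C\vdash\mathbf{spawn}\ M:\mathsf{ActorRef}(A)$ if $\Gamma\mid A\vdash M:\mathbf 1$; $\Gamma\mid A\vdash\mathbf{self}:\mathsf{ActorRef}(A)$).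 $\lambda_{\mathrm{ch}}$: types $\mathbf 1\mid A\to B\mid\mathsf{Chan}(A)$; same values; computations $V\,W\mid\mathbf{let}\ x\Leftarrow M\ \mathbf{in}\ N\mid\mathbf{return}\ V\mid\mathbf{fork}\ M\mid\mathbf{give}\ V\ W\mid\mathbf{take}\ V\mid\mathbf{newCh}$. In both calculi evaluation contexts are $E ::= [\,]\mid\mathbf{let}\ x\Leftarrow E\ \mathbf{in}\ M$ and term reduction $\longrightarrow_{\mathsf{M}}$ is given by $(\lambda x.M)V\longrightarrow_{\mathsf{M}} M\{V/x\}$, $\mathbf{let}\ x\Leftarrow\mathbf{return}\ V\ \mathbf{in}\ M\longrightarrow_{\mathsf{M}} M\{V/x\}$, and $E[M]\longrightarrow_{\mathsf{M}}E[M']$ if $M\longrightarrow_{\mathsf{M}}M'$; $\longrightarrow_{\mathsf{M}}^{*}$ is its reflexive–transitive closure. Translation $[\![-]\!]$ from $\lambda_{\mathrm{act}}$ to $\lambda_{\mathrm{ch}}$: values $[\![x]\!]=x$, $[\![a]\!]=a$, $[\![()]\!]=()$, $[\![\lambda x.M]\!]=\lambda x.\lambda ch.([\![M]\!]ch)$; computations, parameterised by $ch$: $[\![\mathbf{let}\ x\Leftarrow M\ \mathbf{in}\ N]\!]ch=\mathbf{let}\ x\Leftarrow[\![M]\!]ch\ \mathbf{in}\ [\![N]\!]ch$, $[\![V\,W]\!]ch=\mathbf{let}\ f\Leftarrow([\![V]\!]\,[\![W]\!])\ \mathbf{in}\ f\,ch$, $[\![\mathbf{return}\ V]\!]ch=\mathbf{return}\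 [\![V]\!]$, $[\![\mathbf{self}]\!]ch=\mathbf{return}\ ch$, $[\![\mathbf{receive}]\!]ch=\mathbf{take}\ ch$, $[\![\mathbf{spawn}\ M]\!]ch=\mathbf{let}\ chMb\Leftarrow\mathbf{newCh}\ \mathbf{in}\ \mathbf{let}\ y\Leftarrow\mathbf{fork}([\![M]\!]chMb)\ \mathbf{in}\ \mathbf{return}\ chMb$ ($y$ fresh), $[\![\mathbf{send}\ V\ W]\!]ch=\mathbf{give}\ [\![V]\!]\ [\![W]\!]$. *)

theory Defs
  imports Main
begin

datatype aty = AUnitT | AFun aty aty aty (* AFun A C B  =  A -C-> B *) | ActorRef aty

datatype aval = AVar nat | AName nat | ALam acomp | AUnit
and acomp = AApp aval aval
  | ALet acomp acomp   (* ALet M N = let x <= M in N ; N binds index 0 *)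
  | AReturn aval | ASpawn acomp | ASend aval aval | AReceive | ASelf

datatype cval = CVar nat | CName nat | CLam ccomp | CUnit
and ccomp = CApp cval cval | CLet ccomp ccomp | CReturn cval | CFork ccomp
  | CGive cval cval | CTake cval | CNewCh

fun aliftv :: "nat \<Rightarrow> aval \<Rightarrow> aval" and aliftc :: "nat \<Rightarrow> acomp \<Rightarrow> acomp" where
  "aliftv k (AVar i) = AVar (if i < k then i else Suc i)"
| "aliftv k (AName a) = AName a"
| "aliftv k (ALam M) = ALam (aliftc (Suc k) M)"
| "aliftv k AUnit = AUnit"
| "aliftc k (AApp V W) = AApp (aliftv k V) (aliftv k W)"
| "aliftc k (ALet M N) = ALet (aliftc k M) (aliftc (Suc k) N)"
| "aliftc k (AReturn V) = AReturn (aliftv k V)"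
| "aliftc k (ASpawn M) = ASpawn (aliftc k M)"
| "aliftc k (ASend V W) = ASend (aliftv k V) (aliftv k W)"
| "aliftc k AReceive = AReceive"
| "aliftc k ASelf = ASelf"

fun asubstv :: "nat \<Rightarrow> aval \<Rightarrow> aval \<Rightarrow> aval" and asubstc :: "nat \<Rightarrow> aval \<Rightarrow> acomp \<Rightarrow> acomp" where
  "asubstv k U (AVar i) = (if i < k then AVar i else if i = k then U else AVar (i - 1))"
| "asubstv k U (AName a) = AName a"
| "asubstv k U (ALam M) = ALam (asubstc (Suc k) (aliftv 0 U) M)"
| "asubstv k U AUnit = AUnit"
| "asubstc k U (AApp V W) = AApp (asubstv k U V) (asubstv k U W)"
| "asubstc k U (ALet M N) = ALet (asubstc k U M) (asubstc (Suc k) (aliftv 0 U) N)"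
| "asubstc k U (AReturn V) = AReturn (asubstv k U V)"
| "asubstc k U (ASpawn M) = ASpawn (asubstc k U M)"
| "asubstc k U (ASend V W) = ASend (asubstv k U V) (asubstv k U W)"
| "asubstc k U AReceive = AReceive"
| "asubstc k U ASelf = ASelf"

fun cliftv :: "nat \<Rightarrow> cval \<Rightarrow> cval" and cliftc :: "nat \<Rightarrow> ccomp \<Rightarrow> ccomp" where
  "cliftv k (CVar i) = CVar (if i < k then i else Suc i)"
| "cliftv k (CName a) = CName a"
| "cliftv k (CLam M) = CLam (cliftc (Suc k) M)"
| "cliftv k CUnit = CUnit"
| "cliftc k (CApp V W) = CApp (cliftv k V) (cliftv k W)"
| "cliftc k (CLet M N) = CLet (cliftc k M) (cliftc (Suc k) N)"
| "cliftc k (CReturn V) = CReturn (cliftv k V)"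
| "cliftc k (CFork M) = CFork (cliftc k M)"
| "cliftc k (CGive V W) = CGive (cliftv k V) (cliftv k W)"
| "cliftc k (CTake V) = CTake (cliftv k V)"
| "cliftc k CNewCh = CNewCh"

fun csubstv :: "nat \<Rightarrow> cval \<Rightarrow> cval \<Rightarrow> cval" and csubstc :: "nat \<Rightarrow> cval \<Rightarrow> ccomp \<Rightarrow> ccomp" where
  "csubstv k U (CVar i) = (if i < k then CVar i else if i = k then U else CVar (i - 1))"
| "csubstv k U (CName a) = CName a"
| "csubstv k U (CLam M) = CLam (csubstc (Suc k) (cliftv 0 U) M)"
| "csubstv k U CUnit = CUnit"
| "csubstc k U (CApp V W) = CApp (csubstv k U V) (csubstv k U W)"
| "csubstc k U (CLet M N) = CLet (csubstc k U M) (csubstc (Suc k) (cliftv 0 U) N)"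
| "csubstc k U (CReturn V) = CReturn (csubstv k U V)"
| "csubstc k U (CFork M) = CFork (csubstc k U M)"
| "csubstc k U (CGive V W) = CGive (csubstv k U V) (csubstv k U W)"
| "csubstc k U (CTake V) = CTake (csubstv k U V)"
| "csubstc k U CNewCh = CNewCh"

text \<open>Delta assigns types to names, Gamma (a list, de Bruijn) to variables;
  together they form the context Gamma of the paper.\<close>

inductive vtyp :: "(nat \<Rightarrow> aty option) \<Rightarrow> aty list \<Rightarrow> aval \<Rightarrow> aty \<Rightarrow> bool"
  and ctyp :: "(nat \<Rightarrow> aty option) \<Rightarrow> aty list \<Rightarrow> aty \<Rightarrow> acomp \<Rightarrow> aty \<Rightarrow> bool"
  (* ctyp D G C M A  :  G | C |- M : A *)
where
  T_Var: "i < length G \<Longrightarrow> G ! i = A \<Longrightarrow> vtyp D G (AVar i) A"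
| T_Name: "D a = Some A \<Longrightarrow> vtyp D G (AName a) A"
| T_Lam: "ctyp D (A # G) C M B \<Longrightarrow> vtyp D G (ALam M) (AFun A C B)"
| T_Unit: "vtyp D G AUnit AUnitT"
| T_App: "vtyp D G V (AFun A C B) \<Longrightarrow> vtyp D G W A \<Longrightarrow> ctyp D G C (AApp V W) B"
| T_Let: "ctyp D G C M A \<Longrightarrow> ctyp D (A # G) C N B \<Longrightarrow> ctyp D G C (ALet M N) B"
| T_Return: "vtyp D G V A \<Longrightarrow> ctyp D G C (AReturn V) A"
| T_Send: "vtyp D G V A \<Longrightarrow> vtyp D G W (ActorRef A) \<Longrightarrow> ctyp D G C (ASend V W) AUnitT"
| T_Receive: "ctyp D G A AReceive A"
| T_Spawn: "ctyp D G A M AUnitT \<Longrightarrow> ctyp D G C (ASpawn M) (ActorRef A)"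
| T_Self: "ctyp D G A ASelf (ActorRef A)"

inductive astep :: "acomp \<Rightarrow> acomp \<Rightarrow> bool" where
  "astep (AApp (ALam M) V) (asubstc 0 V M)"
| "astep (ALet (AReturn V) M) (asubstc 0 V M)"
| "astep M M' \<Longrightarrow> astep (ALet M N) (ALet M' N)"

inductive cstep :: "ccomp \<Rightarrow> ccomp \<Rightarrow> bool" where
  "cstep (CApp (CLam M) V) (csubstc 0 V M)"
| "cstep (CLet (CReturn V) M) (csubstc 0 V M)"
| "cstep M M' \<Longrightarrow> cstep (CLet M N) (CLet M' N)"

abbreviation csteps :: "ccomp \<Rightarrow> ccomp \<Rightarrow> bool" where
  "csteps \<equiv> cstep\<^sup>*\<^sup>*"

text \<open>The translation is parameterised by a renaming rho of source variable indices
  to target variable indices (needed because the translation inserts binders);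
  the top-level translation uses rho = id.\<close>

fun trv :: "(nat \<Rightarrow> nat) \<Rightarrow> aval \<Rightarrow> cval" and trc :: "(nat \<Rightarrow> nat) \<Rightarrow> acomp \<Rightarrow> cval \<Rightarrow> ccomp" where
  "trv \<rho> (AVar i) = CVar (\<rho> i)"
| "trv \<rho> (AName a) = CName a"
| "trv \<rho> AUnit = CUnit"
| "trv \<rho> (ALam M) =
     CLam (CReturn (CLam (trc (\<lambda>i. case i of 0 \<Rightarrow> 1 | Suc j \<Rightarrow> \<rho> j + 2) M (CVar 0))))"
| "trc \<rho> (ALet M N) ch =
     CLet (trc \<rho> M ch) (trc (\<lambda>i. case i of 0 \<Rightarrow> 0 | Suc j \<Rightarrow> Suc (\<rho> j)) N (cliftv 0 ch))"
| "trc \<rho> (AApp V W) ch = CLet (CApp (trv \<rho> V) (trv \<rho> W)) (CApp (CVar 0) (cliftv 0 ch))"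
| "trc \<rho> (AReturn V) ch = CReturn (trv \<rho> V)"
| "trc \<rho> ASelf ch = CReturn ch"
| "trc \<rho> AReceive ch = CTake ch"
| "trc \<rho> (ASpawn M) ch =
     CLet CNewCh (CLet (CFork (trc (\<lambda>i. \<rho> i + 1) M (CVar 0))) (CReturn (CVar 1)))"
| "trc \<rho> (ASend V W) ch = CGive (trv \<rho> V) (trv \<rho> W)"

abbreviation translate :: "acomp \<Rightarrow> cval \<Rightarrow> ccomp" where
  "translate M ch \<equiv> trc id M ch"

end

theory Submission
  imports Defs
begin

text \<open>The translation commutes with substitution once it is generalised from variable renamings
  to arbitrary environments mapping source variables to target values. A source beta step
  (\<lambda>x.M) V then becomes three target steps: the outer abstraction takes the argument, the
  administrative let returns the inner abstraction, and that abstraction takes the channel;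
  a source let-return step becomes exactly one target step.\<close>

lemma cliftv_cliftv:
  "j \<le> k \<Longrightarrow> cliftv (Suc k) (cliftv j v) = cliftv j (cliftv k v)"
  and cliftc_cliftc:
  "j \<le> k \<Longrightarrow> cliftc (Suc k) (cliftc j c) = cliftc j (cliftc k c)"
  by (induction v and c arbitrary: j k and j k rule: cval.induct ccomp.induct) auto

lemma csubstv_cliftv:
  "csubstv k U (cliftv k v) = v"
  and csubstc_cliftc:
  "csubstc k U (cliftc k c) = c"
  by (induction v and c arbitrary: k U and k U rule: cval.induct ccomp.induct) auto

lemma csubstv_cliftv_comm:
  "j \<le> k \<Longrightarrow> csubstv (Suc k) (cliftv j U) (cliftv j v) = cliftv j (csubstv k U v)"
  and csubstc_cliftc_comm:
  "j \<le> k \<Longrightarrow> csubstc (Suc k) (cliftv j U) (cliftc j c) = cliftc j (csubstc k U c)"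
proof (induction v and c arbitrary: j k U and j k U rule: cval.induct ccomp.induct)
  case (CLam M)
  then show ?case by (simp add: cliftv_cliftv[of 0 j U, simplified, symmetric])
next
  case (CLet M N)
  then show ?case by (simp add: cliftv_cliftv[of 0 j U, simplified, symmetric])
qed auto

lemma csteps_CLet: "csteps M M' \<Longrightarrow> csteps (CLet M N) (CLet M' N)"
  by (induction rule: rtranclp_induct) (auto intro: rtranclp.rtrancl_into_rtrancl cstep.intros)

definition env_up :: "(nat \<Rightarrow> cval) \<Rightarrow> nat \<Rightarrow> cval" where
  "env_up \<sigma> = (\<lambda>i. case i of 0 \<Rightarrow> CVar 0 | Suc j \<Rightarrow> cliftv 0 (\<sigma> j))"

text \<open>Under the two binders of a translated abstraction the source argument is index 1,
  the channel index 0.\<close>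
definition env_up_lam :: "(nat \<Rightarrow> cval) \<Rightarrow> nat \<Rightarrow> cval" where
  "env_up_lam \<sigma> = (\<lambda>i. case i of 0 \<Rightarrow> CVar 1 | Suc j \<Rightarrow> cliftv 0 (cliftv 0 (\<sigma> j)))"

definition env_insert :: "nat \<Rightarrow> cval \<Rightarrow> (nat \<Rightarrow> cval) \<Rightarrow> nat \<Rightarrow> cval" where
  "env_insert k U \<sigma> = (\<lambda>i. if i < k then \<sigma> i else if i = k then U else \<sigma> (i - 1))"

definition lift_index :: "nat \<Rightarrow> nat \<Rightarrow> nat" where
  "lift_index k i = (if i < k then i else Suc i)"

fun trsv :: "(nat \<Rightarrow> cval) \<Rightarrow> aval \<Rightarrow> cval"
  and trsc :: "(nat \<Rightarrow> cval) \<Rightarrow> acomp \<Rightarrow> cval \<Rightarrow> ccomp" where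
  "trsv \<sigma> (AVar i) = \<sigma> i"
| "trsv \<sigma> (AName a) = CName a"
| "trsv \<sigma> AUnit = CUnit"
| "trsv \<sigma> (ALam M) = CLam (CReturn (CLam (trsc (env_up_lam \<sigma>) M (CVar 0))))"
| "trsc \<sigma> (ALet M N) ch = CLet (trsc \<sigma> M ch) (trsc (env_up \<sigma>) N (cliftv 0 ch))"
| "trsc \<sigma> (AApp V W) ch = CLet (CApp (trsv \<sigma> V) (trsv \<sigma> W)) (CApp (CVar 0) (cliftv 0 ch))"
| "trsc \<sigma> (AReturn V) ch = CReturn (trsv \<sigma> V)"
| "trsc \<sigma> ASelf ch = CReturn ch"
| "trsc \<sigma> AReceive ch = CTake ch"
| "trsc \<sigma> (ASpawn M) ch =
     CLet CNewCh (CLet (CFork (trsc (\<lambda>i. cliftv 0 (\<sigma> i)) M (CVar 0))) (CReturn (CVar 1)))"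
| "trsc \<sigma> (ASend V W) ch = CGive (trsv \<sigma> V) (trsv \<sigma> W)"

lemma trv_eq_trsv:
  "trv \<rho> V = trsv (\<lambda>i. CVar (\<rho> i)) V"
  and trc_eq_trsc:
  "trc \<rho> M ch = trsc (\<lambda>i. CVar (\<rho> i)) M ch"
proof (induction V and M arbitrary: \<rho> and \<rho> ch rule: aval.induct acomp.induct)
  case (ALam M)
  have "env_up_lam (\<lambda>i. CVar (\<rho> i)) = (\<lambda>i. CVar (case i of 0 \<Rightarrow> Suc 0 | Suc j \<Rightarrow> Suc (Suc (\<rho> j))))"
    by (rule ext) (simp add: env_up_lam_def split: nat.split)
  then show ?case using ALam by simp
next
  case (ALet M N)
  have "env_up (\<lambda>i. CVar (\<rho> i)) = (\<lambda>i. CVar (case i of 0 \<Rightarrow> 0 | Suc j \<Rightarrow> Suc (\<rho> j)))"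
    by (rule ext) (simp add: env_up_def split: nat.split)
  then show ?case using ALet by simp
qed auto

lemma cliftv_trsv:
  "cliftv k (trsv \<sigma> V) = trsv (\<lambda>i. cliftv k (\<sigma> i)) V"
  and cliftc_trsc:
  "cliftc k (trsc \<sigma> M ch) = trsc (\<lambda>i. cliftv k (\<sigma> i)) M (cliftv k ch)"
proof (induction V and M arbitrary: k \<sigma> and k \<sigma> ch rule: aval.induct acomp.induct)
  case (ALam M)
  have "(\<lambda>i. cliftv (Suc (Suc k)) (env_up_lam \<sigma> i)) = env_up_lam (\<lambda>i. cliftv k (\<sigma> i))"
    by (rule ext) (simp add: env_up_lam_def cliftv_cliftv split: nat.split)
  then show ?case using ALam by simp
next
  case (ALet M N)
  have "(\<lambda>i. cliftv (Suc k) (env_up \<sigma> i)) = env_up (\<lambda>i. cliftv k (\<sigma> i))"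
    by (rule ext) (simp add: env_up_def cliftv_cliftv split: nat.split)
  then show ?case using ALet by (simp add: cliftv_cliftv)
qed (auto simp: cliftv_cliftv)

lemma csubstv_trsv:
  "csubstv k U (trsv \<sigma> V) = trsv (\<lambda>i. csubstv k U (\<sigma> i)) V"
  and csubstc_trsc:
  "csubstc k U (trsc \<sigma> M ch) = trsc (\<lambda>i. csubstv k U (\<sigma> i)) M (csubstv k U ch)"
proof (induction V and M arbitrary: k U \<sigma> and k U \<sigma> ch rule: aval.induct acomp.induct)
  case (ALam M)
  have "(\<lambda>i. csubstv (Suc (Suc k)) (cliftv 0 (cliftv 0 U)) (env_up_lam \<sigma> i))
      = env_up_lam (\<lambda>i. csubstv k U (\<sigma> i))"
    by (rule ext) (simp add: env_up_lam_def csubstv_cliftv_comm split: nat.split)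
  then show ?case using ALam by simp
next
  case (ALet M N)
  have "(\<lambda>i. csubstv (Suc k) (cliftv 0 U) (env_up \<sigma> i)) = env_up (\<lambda>i. csubstv k U (\<sigma> i))"
    by (rule ext) (simp add: env_up_def csubstv_cliftv_comm split: nat.split)
  then show ?case using ALet by (simp add: csubstv_cliftv_comm)
qed (auto simp: csubstv_cliftv_comm)

lemma trsv_aliftv:
  "trsv \<sigma> (aliftv k V) = trsv (\<lambda>i. \<sigma> (lift_index k i)) V"
  and trsc_aliftc:
  "trsc \<sigma> (aliftc k M) ch = trsc (\<lambda>i. \<sigma> (lift_index k i)) M ch"
proof (induction V and M arbitrary: k \<sigma> and k \<sigma> ch rule: aval.induct acomp.induct)
  case (ALam M)
  have "(\<lambda>i. env_up_lam \<sigma> (lift_index (Suc k) i)) = env_up_lam (\<lambda>i. \<sigma> (lift_index k i))"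
    by (rule ext) (simp add: env_up_lam_def lift_index_def split: nat.split)
  then show ?case using ALam by simp
next
  case (ALet M N)
  have "(\<lambda>i. env_up \<sigma> (lift_index (Suc k) i)) = env_up (\<lambda>i. \<sigma> (lift_index k i))"
    by (rule ext) (simp add: env_up_def lift_index_def split: nat.split)
  then show ?case using ALet by simp
qed (auto simp: lift_index_def)

lemma trsv_aliftv_0_env_up: "trsv (env_up \<sigma>) (aliftv 0 W) = cliftv 0 (trsv \<sigma> W)"
proof -
  have "(\<lambda>i. env_up \<sigma> (lift_index 0 i)) = (\<lambda>i. cliftv 0 (\<sigma> i))"
    by (rule ext) (simp add: env_up_def lift_index_def)
  then show ?thesis by (simp add: trsv_aliftv cliftv_trsv)
qed

lemma trsv_aliftv_0_env_up_lam:
  "trsv (env_up_lam \<sigma>) (aliftv 0 W) = cliftv 0 (cliftv 0 (trsv \<sigma> W))"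
proof -
  have "(\<lambda>i. env_up_lam \<sigma> (lift_index 0 i)) = (\<lambda>i. cliftv 0 (cliftv 0 (\<sigma> i)))"
    by (rule ext) (simp add: env_up_lam_def lift_index_def)
  then show ?thesis by (simp add: trsv_aliftv cliftv_trsv)
qed

lemma trsv_asubstv:
  "trsv \<sigma> (asubstv k W V) = trsv (env_insert k (trsv \<sigma> W) \<sigma>) V"
  and trsc_asubstc:
  "trsc \<sigma> (asubstc k W M) ch = trsc (env_insert k (trsv \<sigma> W) \<sigma>) M ch"
proof (induction V and M arbitrary: k W \<sigma> and k W \<sigma> ch rule: aval.induct acomp.induct)
  case (ALam M)
  have "env_insert (Suc k) (trsv (env_up_lam \<sigma>) (aliftv 0 W)) (env_up_lam \<sigma>)
      = env_up_lam (env_insert k (trsv \<sigma> W) \<sigma>)"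
    unfolding trsv_aliftv_0_env_up_lam
    by (rule ext) (auto simp: env_insert_def env_up_lam_def split: nat.split)
  then show ?case using ALam by simp
next
  case (ALet M N)
  have "env_insert (Suc k) (trsv (env_up \<sigma>) (aliftv 0 W)) (env_up \<sigma>)
      = env_up (env_insert k (trsv \<sigma> W) \<sigma>)"
    unfolding trsv_aliftv_0_env_up
    by (rule ext) (auto simp: env_insert_def env_up_def split: nat.split)
  then show ?case using ALet by simp
next
  case (ASpawn M)
  have "env_insert k (trsv (\<lambda>i. cliftv 0 (\<sigma> i)) W) (\<lambda>i. cliftv 0 (\<sigma> i))
      = (\<lambda>i. cliftv 0 (env_insert k (trsv \<sigma> W) \<sigma> i))"
    by (rule ext) (simp add: env_insert_def cliftv_trsv)
  then show ?case using ASpawn by simp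
qed (auto simp: env_insert_def)

lemma trsc_beta_steps:
  "csteps (trsc \<sigma> (AApp (ALam M) V) ch) (trsc \<sigma> (asubstc 0 V M) ch)"
proof -
  let ?V = "trsv \<sigma> V"
  let ?body = "trsc (env_up_lam \<sigma>) M (CVar 0)"
  let ?Y = "csubstc 1 (cliftv 0 ?V) ?body"
  have take_arg: "cstep (trsc \<sigma> (AApp (ALam M) V) ch)
      (CLet (CReturn (CLam ?Y)) (CApp (CVar 0) (cliftv 0 ch)))"
    using cstep.intros(3)[OF cstep.intros(1)[of "CReturn (CLam ?body)" ?V]] by simp
  have return_fun: "cstep (CLet (CReturn (CLam ?Y)) (CApp (CVar 0) (cliftv 0 ch))) (CApp (CLam ?Y) ch)"
    using cstep.intros(2)[of "CLam ?Y" "CApp (CVar 0) (cliftv 0 ch)"] by (simp add: csubstv_cliftv)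
  have take_channel: "cstep (CApp (CLam ?Y) ch) (csubstc 0 ch ?Y)"
    by (rule cstep.intros(1))
  have "(\<lambda>i. csubstv 0 ch (csubstv 1 (cliftv 0 ?V) (env_up_lam \<sigma> i))) = env_insert 0 ?V \<sigma>"
  proof
    fix i
    show "csubstv 0 ch (csubstv 1 (cliftv 0 ?V) (env_up_lam \<sigma> i)) = env_insert 0 ?V \<sigma> i"
    proof (cases i)
      case (Suc j)
      have "cliftv 0 (cliftv 0 (\<sigma> j)) = cliftv 1 (cliftv 0 (\<sigma> j))"
        using cliftv_cliftv[of 0 0 "\<sigma> j"] by simp
      then show ?thesis using Suc by (simp add: env_up_lam_def env_insert_def csubstv_cliftv)
    qed (simp add: env_up_lam_def env_insert_def csubstv_cliftv)
  qed
  then have "csubstc 0 ch ?Y = trsc \<sigma> (asubstc 0 V M) ch"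
    by (simp add: csubstc_trsc trsc_asubstc)
  with take_arg return_fun take_channel show ?thesis
    by (metis r_into_rtranclp rtranclp_trans)
qed

lemma trsc_let_return_step:
  "cstep (trsc \<sigma> (ALet (AReturn V) M) ch) (trsc \<sigma> (asubstc 0 V M) ch)"
proof -
  have "(\<lambda>i. csubstv 0 (trsv \<sigma> V) (env_up \<sigma> i)) = env_insert 0 (trsv \<sigma> V) \<sigma>"
    by (rule ext) (simp add: env_up_def env_insert_def csubstv_cliftv split: nat.split)
  then have "csubstc 0 (trsv \<sigma> V) (trsc (env_up \<sigma>) M (cliftv 0 ch)) = trsc \<sigma> (asubstc 0 V M) ch"
    by (simp add: csubstc_trsc trsc_asubstc csubstv_cliftv)
  then show ?thesis
    using cstep.intros(2)[of "trsv \<sigma> V" "trsc (env_up \<sigma>) M (cliftv 0 ch)"] by simp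
qed

lemma trsc_simulates_astep: "astep M1 M2 \<Longrightarrow> csteps (trsc \<sigma> M1 ch) (trsc \<sigma> M2 ch)"
proof (induction arbitrary: \<sigma> ch rule: astep.induct)
  case (1 M V)
  show ?case by (rule trsc_beta_steps)
next
  case (2 V M)
  show ?case using trsc_let_return_step by blast
next
  case (3 M M' N)
  then show ?case by (simp add: csteps_CLet)
qed

theorem lemma19:
  fixes D :: "nat \<Rightarrow> aty option" and G :: "aty list" and B A :: aty
    and M1 M2 :: acomp and \<alpha> :: cval
  assumes "ctyp D G B M1 A"
    and "astep M1 M2"
    and "(\<exists>n. \<alpha> = CVar n) \<or> (\<exists>a. \<alpha> = CName a)"
  shows "csteps (translate M1 \<alpha>) (translate M2 \<alpha>)"
  using trsc_simulates_astep[OF assms(2)] by (simp add: trc_eq_trsc)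

end
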